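(* Let $M(C,\bar\xi,\pi)$ be a Myller configuration in $E^3$ with Darboux frame $(\bar\xi,\bar\mu,\bar v)$ and invariants $G,K,T$ (notation in the context), and assume $(G(s),K(s))\neq(0,0)$ for all $s$. Define $$\sigma_\xi=\frac{K^{2}\left(\frac{G}{K}\right)'-(G^{2}+K^{2})T}{(G^{2}+K^{2})^{3/2}},$$ where $K^2\left(\frac{G}{K}\right)'$ stands for $G'K-GK'$. Then $C$ is a $\bar\xi$-helix in $M$ if and only if $\sigma_\xi$ is constant; in that case the constant angle $\theta$ between $\bar\xi$ and the fixed axis satisfies $\cot\theta=\mp\sigma_\xi$ (for an appropriate choice of sign).
   Context: Let $C$ be a smooth curve in Euclidean 3-space $E^3$ parametrized by arclength $s\in I$; primes denote $d/ds$. A Myller configuration $M(C,\bar\xi,\pi)$ consists of a smooth unit vector field (versor field) $\bar\xi(s)$ along $C$ and a smooth field of oriented planes $\pi(s)$ along $C$ with $\bar\xi(s)\in\pi(s)$. Let $\bar v(s)$ be the unit normal of the oriented plane $\pi(s)$ and $\bar\mu=\bar v\times\bar\xi$. The Darboux frame $(\bar\xi,\bar\mu,\bar v)$ is a positively oriented orthonormal frame satisfying $\bar\xi'=G\bar\mu+K\bar v$, $\bar\mu'=-G\bar\xi+T\bar v$, $\bar v'=-K\bar\xi-T\bar\mu$, where the smooth functions $G,K,T$ are called the geodesic curvature, normal curvature and geodesic torsion of $(C,\bar\xi)$ in $M$. The curve $C$ is called a $\bar\xi$-helix in $M$ if there exist a fixed (constant) unit vector $\bar d_\xi$ and a constant $\theta$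 with $\langle\bar\xi(s),\bar d_\xi\rangle=\cos\theta$ for all $s$. *)

theory Defs
  imports "HOL-Analysis.Analysis"
begin

text \<open>Myller configuration M(C, xi, pi) along a curve C parametrized by arclength on I,
  given by its Darboux frame (xi, mu, nu) (nu = unit normal of the oriented plane pi,
  mu = nu x xi) and invariants G (geodesic curvature), K (normal curvature),
  T (geodesic torsion).\<close>
definition myller_darboux ::
  "real set \<Rightarrow> (real \<Rightarrow> real^3) \<Rightarrow> (real \<Rightarrow> real^3) \<Rightarrow> (real \<Rightarrow> real^3)
    \<Rightarrow> (real \<Rightarrow> real^3) \<Rightarrow> (real \<Rightarrow> real) \<Rightarrow> (real \<Rightarrow> real) \<Rightarrow> (real \<Rightarrow> real) \<Rightarrow> bool"
where
  "myller_darboux I C xi mu nu G K T \<longleftrightarrow>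
     (\<forall>s\<in>I.
        C differentiable (at s) \<and> norm (vector_derivative C (at s)) = 1 \<and>
        norm (xi s) = 1 \<and> norm (nu s) = 1 \<and> inner (xi s) (nu s) = 0 \<and>
        mu s = cross3 (nu s) (xi s) \<and>
        (xi has_vector_derivative (G s *\<^sub>R mu s + K s *\<^sub>R nu s)) (at s) \<and>
        (mu has_vector_derivative (- G s *\<^sub>R xi s + T s *\<^sub>R nu s)) (at s) \<and>
        (nu has_vector_derivative (- K s *\<^sub>R xi s - T s *\<^sub>R mu s)) (at s))"

definition xi_helix_with :: "real set \<Rightarrow> (real \<Rightarrow> real^3) \<Rightarrow> real^3 \<Rightarrow> real \<Rightarrow> bool" where
  "xi_helix_with I xi d \<theta> \<longleftrightarrow> norm d = 1 \<and> (\<forall>s\<in>I. inner (xi s) d = cos \<theta>)"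

definition xi_helix :: "real set \<Rightarrow> (real \<Rightarrow> real^3) \<Rightarrow> bool" where
  "xi_helix I xi \<longleftrightarrow> (\<exists>d \<theta>. xi_helix_with I xi d \<theta>)"

definition sigma_xi :: "(real \<Rightarrow> real) \<Rightarrow> (real \<Rightarrow> real) \<Rightarrow> (real \<Rightarrow> real) \<Rightarrow> (real \<Rightarrow> real)
    \<Rightarrow> (real \<Rightarrow> real) \<Rightarrow> real \<Rightarrow> real" where
  "sigma_xi G K T G' K' s =
     (G' s * K s - G s * K' s - ((G s)\<^sup>2 + (K s)\<^sup>2) * T s) / (((G s)\<^sup>2 + (K s)\<^sup>2) powr (3/2))"

end

theory Submission
  imports Defs
begin

(* Along C the versor xi traces a curve on the unit sphere, its spherical indicatrix, with
   xi' = G mu + K nu of length sqrt (G^2 + K^2).  The unit conormal of the indicatrix,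
   u = (xi x xi') / |xi'| = (G nu - K mu) / sqrt (G^2 + K^2), satisfies u' = sigma_xi xi',
   so sigma_xi is, up to sign, the geodesic curvature of the indicatrix.  Hence for
   constants a, e the field a xi + e u has derivative (a + e sigma_xi) xi'.
   If sigma_xi = c, then (a, e) = (-c, 1) / sqrt (1 + c^2) makes a xi + e u a constant unit
   vector d with <xi, d> = a.  Conversely, if <xi, d> = cos theta then <xi', d> = 0, so
   d = cos theta xi + e u with e = <u, d>, which is constant since u' is parallel to xi';
   differentiating gives cos theta + e sigma_xi = 0, where e^2 = sin^2 theta. *)

lemma norm_cross3_orthonormal:
  fixes x y :: "real^3"
  assumes "norm x = 1" "norm y = 1" "x \<bullet> y = 0"
  shows "norm (cross3 x y) = 1"
proof -
  have "(norm (cross3 x y))\<^sup>2 = 1"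
    using norm_cross_dot[of x y] assms by simp
  then show ?thesis
    using norm_ge_zero[of "cross3 x y"] by (auto simp: power2_eq_1_iff)
qed

lemma orthonormal_cross3_expansion:
  fixes x y d :: "real^3"
  assumes "norm x = 1" "norm y = 1" "x \<bullet> y = 0"
  shows "d = (x \<bullet> d) *\<^sub>R x + (y \<bullet> d) *\<^sub>R y + ((cross3 x y) \<bullet> d) *\<^sub>R (cross3 x y)"
proof -
  let ?z = "cross3 x y"
  have unit: "x \<bullet> x = 1" "y \<bullet> y = 1" "?z \<bullet> ?z = 1"
    using assms norm_cross3_orthonormal[OF assms] by (simp_all add: norm_eq_1)
  have "cross3 ?z (cross3 ?z d) = - (x \<bullet> d) *\<^sub>R x - (y \<bullet> d) *\<^sub>R y"
    using assms(3) unit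
    by (simp add: Lagrange cross_skew[of _ d] cross_skew[of "cross3 x y"] cross_mult_right
        Cross3.right_diff_distrib inner_commute algebra_simps)
  moreover have "cross3 ?z (cross3 ?z d) = (?z \<bullet> d) *\<^sub>R ?z - d"
    using unit by (simp add: Lagrange)
  ultimately show ?thesis by (simp add: algebra_simps)
qed

lemma has_vector_derivative_eq_0_if_constant_on_open:
  assumes "(f has_vector_derivative f') (at x)" "open S" "x \<in> S" "\<And>y. y \<in> S \<Longrightarrow> f y = c"
  shows "f' = 0"
proof -
  have "((\<lambda>_. c) has_vector_derivative f') (at x)"
    using has_vector_derivative_transform_within_open[OF assms(1-3)] assms(4) by simp
  then show ?thesis
    using vector_derivative_unique_at has_vector_derivative_const by blast
qed

lemma myller_darboux_frame:
  assumes "myller_darboux I C xi mu nu G K T" "s \<in> I"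
  shows "xi s \<bullet> xi s = 1" "mu s \<bullet> mu s = 1" "nu s \<bullet> nu s = 1"
    and "xi s \<bullet> mu s = 0" "xi s \<bullet> nu s = 0" "mu s \<bullet> nu s = 0"
    and "d = (xi s \<bullet> d) *\<^sub>R xi s + (mu s \<bullet> d) *\<^sub>R mu s + (nu s \<bullet> d) *\<^sub>R nu s"
proof -
  have unit: "norm (xi s) = 1" "norm (nu s) = 1" and orth: "nu s \<bullet> xi s = 0"
    and mu: "mu s = cross3 (nu s) (xi s)"
    using assms unfolding myller_darboux_def by (auto simp: inner_commute)
  show "xi s \<bullet> xi s = 1" "nu s \<bullet> nu s = 1" "xi s \<bullet> nu s = 0"
    using unit orth by (simp_all add: norm_eq_1 inner_commute)
  show "mu s \<bullet> mu s = 1"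
    using norm_cross3_orthonormal[OF unit(2,1) orth] mu by (simp add: norm_eq_1)
  show "xi s \<bullet> mu s = 0" "mu s \<bullet> nu s = 0"
    using mu by (simp_all add: dot_cross_self)
  show "d = (xi s \<bullet> d) *\<^sub>R xi s + (mu s \<bullet> d) *\<^sub>R mu s + (nu s \<bullet> d) *\<^sub>R nu s"
    using orthonormal_cross3_expansion[OF unit(2,1) orth, of d] mu by (simp add: algebra_simps)
qed

definition indicatrix_conormal ::
  "(real \<Rightarrow> real^3) \<Rightarrow> (real \<Rightarrow> real^3) \<Rightarrow> (real \<Rightarrow> real) \<Rightarrow> (real \<Rightarrow> real)
    \<Rightarrow> real \<Rightarrow> real^3"
where
  "indicatrix_conormal mu nu G K s =
     (1 / sqrt ((G s)\<^sup>2 + (K s)\<^sup>2)) *\<^sub>R (G s *\<^sub>R nu s - K s *\<^sub>R mu s)"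

lemma powr_three_halves:
  fixes x :: real
  assumes "0 \<le> x"
  shows "x powr (3/2) = x * sqrt x"
proof -
  have "x powr (3/2) = x powr (1 + 1/2)"
    by simp
  also have "\<dots> = x powr 1 * x powr (1/2)"
    by (rule powr_add)
  also have "\<dots> = x * sqrt x"
    using assms by (simp add: powr_half_sqrt)
  finally show ?thesis .
qed

lemma sigma_xi_eq:
  "sigma_xi G K T G' K' s = (G' s * K s - G s * K' s - ((G s)\<^sup>2 + (K s)\<^sup>2) * T s)
     / (((G s)\<^sup>2 + (K s)\<^sup>2) * sqrt ((G s)\<^sup>2 + (K s)\<^sup>2))"
  unfolding sigma_xi_def by (simp add: powr_three_halves)

lemma indicatrix_conormal_has_vector_derivative:
  assumes md: "myller_darboux I C xi mu nu G K T" and s: "s \<in> I"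
    and dG: "(G has_real_derivative G' s) (at s)" and dK: "(K has_real_derivative K' s) (at s)"
    and nz: "(G s, K s) \<noteq> (0, 0)"
  shows "(indicatrix_conormal mu nu G K has_vector_derivative
      sigma_xi G K T G' K' s *\<^sub>R (G s *\<^sub>R mu s + K s *\<^sub>R nu s)) (at s)"
proof -
  define N where "N = (G s)\<^sup>2 + (K s)\<^sup>2"
  define P where "P = G s * G' s + K s * K' s"
  define Q where "Q = G' s * K s - G s * K' s"
  define X where "X = G s *\<^sub>R mu s + K s *\<^sub>R nu s"
  define V where "V = G s *\<^sub>R nu s - K s *\<^sub>R mu s"
  define W where "W = G' s *\<^sub>R nu s - K' s *\<^sub>R mu s"
  have N: "N > 0"
    using nz unfolding N_def by (auto simp: sum_power2_gt_zero_iff)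
  have dmu: "(mu has_vector_derivative (- G s *\<^sub>R xi s + T s *\<^sub>R nu s)) (at s)"
    and dnu: "(nu has_vector_derivative (- K s *\<^sub>R xi s - T s *\<^sub>R mu s)) (at s)"
    using md s unfolding myller_darboux_def by auto
  have dV: "((\<lambda>s. G s *\<^sub>R nu s - K s *\<^sub>R mu s) has_vector_derivative W - T s *\<^sub>R X) (at s)"
    unfolding W_def X_def
    by (rule derivative_eq_intros dG dK dmu dnu refl)+ (simp add: algebra_simps)
  have dq: "((\<lambda>s. 1 / sqrt ((G s)\<^sup>2 + (K s)\<^sup>2)) has_real_derivative - P / (N * sqrt N)) (at s)"
    using N unfolding P_def
    by (auto intro!: derivative_eq_intros dG dK simp flip: N_def simp: field_simps)
  have du: "(indicatrix_conormal mu nu G K has_vector_derivative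
      (1 / sqrt N) *\<^sub>R (W - T s *\<^sub>R X) + (- P / (N * sqrt N)) *\<^sub>R V) (at s)"
    using has_vector_derivative_scaleR[OF dq dV]
    unfolding indicatrix_conormal_def[abs_def] N_def V_def .
  have "N *\<^sub>R W = P *\<^sub>R V + Q *\<^sub>R X"
    unfolding N_def P_def Q_def V_def W_def X_def by (simp add: algebra_simps power2_eq_square)
  then have "(1 / N) *\<^sub>R (N *\<^sub>R W) = (1 / N) *\<^sub>R (P *\<^sub>R V + Q *\<^sub>R X)"
    by simp
  then have W: "W = (P / N) *\<^sub>R V + (Q / N) *\<^sub>R X"
    using N by (simp add: scaleR_add_right)
  have "(Q - N * T s) / (N * sqrt N) = Q / (N * sqrt N) - T s / sqrt N"
    using N by (simp add: field_simps)
  then have "(1 / sqrt N) *\<^sub>R (W - T s *\<^sub>R X) + (- P / (N * sqrt N)) *\<^sub>R V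
      = sigma_xi G K T G' K' s *\<^sub>R X"
    unfolding W sigma_xi_eq
    by (simp add: scaleR_diff_right scaleR_add_right scaleR_diff_left mult.commute flip: N_def Q_def)
  then show ?thesis
    using du unfolding X_def by simp
qed

lemma indicatrix_conormal_orthonormal:
  assumes "myller_darboux I C xi mu nu G K T" "s \<in> I" "(G s, K s) \<noteq> (0, 0)"
  shows "xi s \<bullet> indicatrix_conormal mu nu G K s = 0"
    and "indicatrix_conormal mu nu G K s \<bullet> indicatrix_conormal mu nu G K s = 1"
proof -
  have N: "(G s)\<^sup>2 + (K s)\<^sup>2 > 0"
    using assms(3) by (auto simp: sum_power2_gt_zero_iff)
  note frame = myller_darboux_frame(1-6)[OF assms(1,2)]
  show "xi s \<bullet> indicatrix_conormal mu nu G K s = 0"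
    using frame unfolding indicatrix_conormal_def by (simp add: inner_diff_right)
  show "indicatrix_conormal mu nu G K s \<bullet> indicatrix_conormal mu nu G K s = 1"
    using frame N assms(3) unfolding indicatrix_conormal_def
    by (simp add: inner_diff_left inner_diff_right inner_commute power2_eq_square)
qed

lemma orthogonal_xi_derivative_decomposition:
  assumes "myller_darboux I C xi mu nu G K T" "s \<in> I" "(G s, K s) \<noteq> (0, 0)"
    and "(G s *\<^sub>R mu s + K s *\<^sub>R nu s) \<bullet> d = 0"
  shows "d = (xi s \<bullet> d) *\<^sub>R xi s
    + (indicatrix_conormal mu nu G K s \<bullet> d) *\<^sub>R indicatrix_conormal mu nu G K s"
proof -
  define N where "N = (G s)\<^sup>2 + (K s)\<^sup>2"
  define b where "b = mu s \<bullet> d"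
  define c where "c = nu s \<bullet> d"
  have N: "N > 0"
    using assms(3) unfolding N_def by (auto simp: sum_power2_gt_zero_iff)
  have orth: "G s * b + K s * c = 0"
    using assms(4) unfolding b_def c_def by (simp add: inner_add_left)
  have "N *\<^sub>R (b *\<^sub>R mu s + c *\<^sub>R nu s)
      = (G s * c - K s * b) *\<^sub>R (G s *\<^sub>R nu s - K s *\<^sub>R mu s)
        + (G s * b + K s * c) *\<^sub>R (G s *\<^sub>R mu s + K s *\<^sub>R nu s)"
    unfolding N_def by (simp add: algebra_simps power2_eq_square)
  then have "(1 / N) *\<^sub>R (N *\<^sub>R (b *\<^sub>R mu s + c *\<^sub>R nu s))
      = (1 / N) *\<^sub>R ((G s * c - K s * b) *\<^sub>R (G s *\<^sub>R nu s - K s *\<^sub>R mu s))"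
    using orth by simp
  then have "b *\<^sub>R mu s + c *\<^sub>R nu s
      = ((G s * c - K s * b) / N) *\<^sub>R (G s *\<^sub>R nu s - K s *\<^sub>R mu s)"
    using N by simp
  also have "\<dots> = ((G s * c - K s * b) / sqrt N)
      *\<^sub>R ((1 / sqrt N) *\<^sub>R (G s *\<^sub>R nu s - K s *\<^sub>R mu s))"
    using N by simp
  also have "\<dots> = (indicatrix_conormal mu nu G K s \<bullet> d) *\<^sub>R indicatrix_conormal mu nu G K s"
    unfolding indicatrix_conormal_def b_def c_def N_def by (simp add: inner_diff_left)
  finally show ?thesis
    using myller_darboux_frame(7)[OF assms(1,2), of d] unfolding b_def c_def by (metis add.assoc)
qed

lemma helix_axis_has_vector_derivative:
  assumes "myller_darboux I C xi mu nu G K T" "s \<in> I"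
    and "(G has_real_derivative G' s) (at s)" "(K has_real_derivative K' s) (at s)"
    and "(G s, K s) \<noteq> (0, 0)"
  shows "((\<lambda>s. a *\<^sub>R xi s + e *\<^sub>R indicatrix_conormal mu nu G K s) has_vector_derivative
      (a + e * sigma_xi G K T G' K' s) *\<^sub>R (G s *\<^sub>R mu s + K s *\<^sub>R nu s)) (at s)"
proof -
  have "(xi has_vector_derivative (G s *\<^sub>R mu s + K s *\<^sub>R nu s)) (at s)"
    using assms(1,2) unfolding myller_darboux_def by auto
  then show ?thesis
    using indicatrix_conormal_has_vector_derivative[where G'=G' and K'=K', OF assms]
    by (auto intro!: derivative_eq_intros simp: algebra_simps)
qed

lemma helix_axis_inner:
  assumes "myller_darboux I C xi mu nu G K T" "s \<in> I" "(G s, K s) \<noteq> (0, 0)"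
  shows "xi s \<bullet> (a *\<^sub>R xi s + e *\<^sub>R indicatrix_conormal mu nu G K s) = a"
    and "(a *\<^sub>R xi s + e *\<^sub>R indicatrix_conormal mu nu G K s)
      \<bullet> (a *\<^sub>R xi s + e *\<^sub>R indicatrix_conormal mu nu G K s) = a\<^sup>2 + e\<^sup>2"
  using myller_darboux_frame(1)[OF assms(1,2)] indicatrix_conormal_orthonormal[OF assms]
  by (simp_all add: inner_add_left inner_add_right inner_commute power2_eq_square)

lemma constant_helix_axis_imp_sigma_xi:
  assumes "open I" and md: "myller_darboux I C xi mu nu G K T" and s: "s \<in> I"
    and "(G has_real_derivative G' s) (at s)" "(K has_real_derivative K' s) (at s)"
    and nz: "(G s, K s) \<noteq> (0, 0)"
    and "\<And>s. s \<in> I \<Longrightarrow> a *\<^sub>R xi s + e *\<^sub>R indicatrix_conormal mu nu G K s = d"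
  shows "a + e * sigma_xi G K T G' K' s = 0"
proof -
  let ?X = "G s *\<^sub>R mu s + K s *\<^sub>R nu s"
  have "(a + e * sigma_xi G K T G' K' s) *\<^sub>R ?X = 0"
    using helix_axis_has_vector_derivative[where G'=G' and K'=K', OF assms(2-6)] assms(1,3,7)
    by (rule has_vector_derivative_eq_0_if_constant_on_open)
  moreover have "?X \<noteq> 0"
  proof
    assume "?X = 0"
    then have "?X \<bullet> mu s = 0" "?X \<bullet> nu s = 0"
      by simp_all
    then show False
      using nz myller_darboux_frame(1-6)[OF md s] by (simp add: inner_add_right inner_commute)
  qed
  ultimately show ?thesis
    by simp
qed

lemma xi_helix_with_imp_xi_derivative_orthogonal:
  assumes "open I" "myller_darboux I C xi mu nu G K T" "xi_helix_with I xi d \<theta>" "s \<in> I"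
  shows "(G s *\<^sub>R mu s + K s *\<^sub>R nu s) \<bullet> d = 0"
proof -
  have "(xi has_vector_derivative G s *\<^sub>R mu s + K s *\<^sub>R nu s) (at s)"
    using assms(2,4) unfolding myller_darboux_def by auto
  then have "((\<lambda>s. xi s \<bullet> d) has_vector_derivative (G s *\<^sub>R mu s + K s *\<^sub>R nu s) \<bullet> d) (at s)"
    by (rule bounded_linear.has_vector_derivative[OF bounded_linear_inner_left])
  then show ?thesis
    by (rule has_vector_derivative_eq_0_if_constant_on_open[where c = "cos \<theta>"])
      (use assms(1,3,4) in \<open>auto simp: xi_helix_with_def\<close>)
qed

lemma xi_helix_with_imp_sigma_xi:
  assumes I: "open I" "is_interval I" "s0 \<in> I"
    and md: "myller_darboux I C xi mu nu G K T"
    and dG: "\<And>s. s \<in> I \<Longrightarrow> (G has_real_derivative G' s) (at s)"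
    and dK: "\<And>s. s \<in> I \<Longrightarrow> (K has_real_derivative K' s) (at s)"
    and nz: "\<And>s. s \<in> I \<Longrightarrow> (G s, K s) \<noteq> (0, 0)"
    and helix: "xi_helix_with I xi d \<theta>"
  obtains e where "e \<noteq> 0" "e\<^sup>2 = (sin \<theta>)\<^sup>2"
    "\<And>s. s \<in> I \<Longrightarrow> cos \<theta> + e * sigma_xi G K T G' K' s = 0"
proof -
  let ?u = "indicatrix_conormal mu nu G K"
  let ?X = "\<lambda>s. G s *\<^sub>R mu s + K s *\<^sub>R nu s"
  have xi_d: "\<And>s. s \<in> I \<Longrightarrow> xi s \<bullet> d = cos \<theta>" and d: "d \<bullet> d = 1"
    using helix unfolding xi_helix_with_def by (auto simp: norm_eq_1)
  have orth: "\<And>s. s \<in> I \<Longrightarrow> ?X s \<bullet> d = 0"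
    using xi_helix_with_imp_xi_derivative_orthogonal[OF I(1) md helix] .
  have conormal_d: "((\<lambda>s. ?u s \<bullet> d) has_vector_derivative 0) (at s within I)" if s: "s \<in> I" for s
  proof -
    have "((\<lambda>s. ?u s \<bullet> d) has_vector_derivative (sigma_xi G K T G' K' s *\<^sub>R ?X s) \<bullet> d) (at s)"
      using indicatrix_conormal_has_vector_derivative[where G'=G' and K'=K',
          OF md s dG[OF s] dK[OF s] nz[OF s]]
      by (rule bounded_linear.has_vector_derivative[OF bounded_linear_inner_left])
    then show ?thesis
      using orth[OF s] by (simp add: has_vector_derivative_at_within)
  qed
  obtain e where e: "\<And>s. s \<in> I \<Longrightarrow> ?u s \<bullet> d = e"
    using has_vector_derivative_zero_constant[OF is_interval_convex[OF I(2)] conormal_d] by blast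
  have axis: "cos \<theta> *\<^sub>R xi s + e *\<^sub>R ?u s = d" if s: "s \<in> I" for s
    using orthogonal_xi_derivative_decomposition[OF md s nz[OF s] orth[OF s]] xi_d[OF s] e[OF s]
    by simp
  have sigma: "cos \<theta> + e * sigma_xi G K T G' K' s = 0" if s: "s \<in> I" for s
    using axis
    by (rule constant_helix_axis_imp_sigma_xi[where G'=G' and K'=K',
          OF I(1) md s dG[OF s] dK[OF s] nz[OF s]])
  have "(cos \<theta>)\<^sup>2 + e\<^sup>2 = 1"
    using helix_axis_inner(2)[OF md I(3) nz[OF I(3)], of "cos \<theta>" e] axis[OF I(3)] d by simp
  then have "e\<^sup>2 = (sin \<theta>)\<^sup>2"
    by (simp add: sin_squared_eq)
  moreover have "e \<noteq> 0"
    using sigma[OF I(3)] \<open>(cos \<theta>)\<^sup>2 + e\<^sup>2 = 1\<close> by auto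
  ultimately show thesis
    using that sigma by blast
qed

lemma sigma_xi_constant_imp_xi_helix:
  assumes I: "is_interval I" "s0 \<in> I"
    and md: "myller_darboux I C xi mu nu G K T"
    and dG: "\<And>s. s \<in> I \<Longrightarrow> (G has_real_derivative G' s) (at s)"
    and dK: "\<And>s. s \<in> I \<Longrightarrow> (K has_real_derivative K' s) (at s)"
    and nz: "\<And>s. s \<in> I \<Longrightarrow> (G s, K s) \<noteq> (0, 0)"
    and const: "\<And>s. s \<in> I \<Longrightarrow> sigma_xi G K T G' K' s = c"
  shows "xi_helix I xi"
proof -
  define k where "k = 1 / sqrt (1 + c\<^sup>2)"
  define a where "a = - c * k"
  have "1 + c\<^sup>2 > 0"
    by (simp add: add_pos_nonneg)
  then have unit: "a\<^sup>2 + k\<^sup>2 = 1"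
    unfolding a_def k_def by (simp add: power_mult_distrib power_divide field_simps)
  let ?D = "\<lambda>s. a *\<^sub>R xi s + k *\<^sub>R indicatrix_conormal mu nu G K s"
  have D: "(?D has_vector_derivative 0) (at s within I)" if s: "s \<in> I" for s
    using helix_axis_has_vector_derivative[where G'=G' and K'=K',
        OF md s dG[OF s] dK[OF s] nz[OF s], of a k]
    unfolding const[OF s] a_def by (simp add: has_vector_derivative_at_within)
  obtain D0 where D0: "\<And>s. s \<in> I \<Longrightarrow> ?D s = D0"
    using has_vector_derivative_zero_constant[OF is_interval_convex[OF I(1)] D] by blast
  have "a\<^sup>2 \<le> 1"
    using unit zero_le_power2[of k] by linarith
  then have "cos (arccos a) = a"
    by (intro cos_arccos_abs) (simp flip: abs_square_le_1)
  moreover have "D0 \<bullet> D0 = 1"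
    using helix_axis_inner(2)[OF md I(2) nz[OF I(2)], of a k] D0[OF I(2)] unit by simp
  moreover have "xi s \<bullet> D0 = a" if s: "s \<in> I" for s
    using helix_axis_inner(1)[OF md s nz[OF s], of a k] D0[OF s] by simp
  ultimately have "xi_helix_with I xi D0 (arccos a)"
    unfolding xi_helix_with_def by (simp add: norm_eq_1)
  then show ?thesis
    unfolding xi_helix_def by blast
qed

lemma cot_eq_plus_minus:
  assumes "e \<noteq> 0" "e\<^sup>2 = (sin \<theta>)\<^sup>2" "cos \<theta> + e * x = 0"
  shows "cot \<theta> = x \<or> cot \<theta> = - x"
proof -
  have "sin \<theta> = e \<or> sin \<theta> = - e"
    using assms(2) unfolding power2_eq_iff by auto
  moreover have "cos \<theta> = - e * x"
    using assms(3) by (simp add: add_eq_0_iff2)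
  ultimately show ?thesis
    using assms(1) unfolding cot_def by auto
qed

theorem theorem6:
  fixes I :: "real set" and C xi mu nu :: "real \<Rightarrow> real^3" and G K T G' K' :: "real \<Rightarrow> real"
  assumes "open I" and "is_interval I" and "I \<noteq> {}"
    and "myller_darboux I C xi mu nu G K T"
    and "\<And>s. s \<in> I \<Longrightarrow> (G has_real_derivative G' s) (at s)"
    and "\<And>s. s \<in> I \<Longrightarrow> (K has_real_derivative K' s) (at s)"
    and "\<And>s. s \<in> I \<Longrightarrow> (G s, K s) \<noteq> (0, 0)"
  shows "(xi_helix I xi \<longleftrightarrow> (\<exists>c. \<forall>s\<in>I. sigma_xi G K T G' K' s = c))
    \<and> (\<forall>d \<theta>. xi_helix_with I xi d \<theta> \<longrightarrow>
          (\<forall>s\<in>I. cot \<theta> = sigma_xi G K T G' K' s \<or> cot \<theta> = - sigma_xi G K T G' K' s))"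
proof -
  obtain s0 where s0: "s0 \<in> I"
    using assms(3) by blast
  have helix_sigma: "\<exists>e. e \<noteq> 0 \<and> e\<^sup>2 = (sin \<theta>)\<^sup>2
      \<and> (\<forall>s\<in>I. cos \<theta> + e * sigma_xi G K T G' K' s = 0)"
    if "xi_helix_with I xi d \<theta>" for d \<theta>
    by (rule xi_helix_with_imp_sigma_xi[OF assms(1,2) s0 assms(4)]) (use assms(5-7) that in auto)
  show ?thesis
  proof (intro conjI iffI allI impI ballI)
    assume "xi_helix I xi"
    then obtain d \<theta> where "xi_helix_with I xi d \<theta>"
      unfolding xi_helix_def by blast
    then obtain e where "e \<noteq> 0" "\<forall>s\<in>I. cos \<theta> + e * sigma_xi G K T G' K' s = 0"
      using helix_sigma by blast
    then have "\<forall>s\<in>I. sigma_xi G K T G' K' s = - cos \<theta> / e"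
      by (simp add: eq_divide_eq add_eq_0_iff2 mult.commute)
    then show "\<exists>c. \<forall>s\<in>I. sigma_xi G K T G' K' s = c" ..
  next
    assume "\<exists>c. \<forall>s\<in>I. sigma_xi G K T G' K' s = c"
    then obtain c where "\<forall>s\<in>I. sigma_xi G K T G' K' s = c" ..
    then show "xi_helix I xi"
      by (intro sigma_xi_constant_imp_xi_helix[OF assms(2) s0 assms(4)]) (use assms(5-7) in auto)
  next
    fix d \<theta> s
    assume "xi_helix_with I xi d \<theta>" "s \<in> I"
    then obtain e
      where "e \<noteq> 0" "e\<^sup>2 = (sin \<theta>)\<^sup>2" "cos \<theta> + e * sigma_xi G K T G' K' s = 0"
      using helix_sigma by blast
    then show "cot \<theta> = sigma_xi G K T G' K' s \<or> cot \<theta> = - sigma_xi G K T G' K' s"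
      by (rule cot_eq_plus_minus)
  qed
qed

end
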